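(* Let $(\mathcal A,d)$ be a DGA, let $a,b_1,\dots,b_n\in\mathcal A$ be closed with $|a|$ even and $a\wedge b_i$ exact, and let $\xi_i$ satisfy $d\xi_i=a\wedge b_i$. Fix $j\in\{1,\dots,n\}$, let $\eta_j$ be a closed element of the same degree as $\xi_j$, and set $\xi_j'=\xi_j+\eta_j$. Let $c=\sum_{i=1}^n \overline{\xi_1}\wedge\cdots\wedge\overline{\xi_{i-1}}\wedge b_i\wedge\xi_{i+1}\wedge\cdots\wedge\xi_n$ and let $c'$ be given by the same formula with $\xi_j$ replaced by $\xi_j'$. Then $$c'=c+(-1)^{(|b_j|+1)(n-j+\sum_{i>j}|b_i|)}\Big(\sum_{i=1,\,i\neq j}^n\overline{\xi_1}\wedge\cdots\wedge\widehat{\overline{\xi_j}}\wedge\cdots\wedge\overline{\xi_{i-1}}\wedge b_i\wedge\xi_{i+1}\wedge\cdots\wedge\xi_n\Big)\wedge\eta_j,$$ where $\widehat{\overline{\xi_j}}$ means that the factor $\xi_j$ is omitted.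
   Context: A DGA is a graded-commutative differential graded algebra over $\mathbb R$; $|x|$ denotes degree and $\overline{x}=(-1)^{|x|}x$. *)

theory Defs
  imports Main "HOL.Real_Vector_Spaces"
begin

text \<open>The algebra is the type 'a; the grading is given by the family of subspaces G k
  (homogeneous elements of degree k), with G k = 0 for k < 0, so the algebra is
  N-graded; d is the differential of degree +1.\<close>

definition sgnp :: "int \<Rightarrow> real" where
  "sgnp k = (-1::real) powi k"

definition dga :: "(int \<Rightarrow> 'a::real_algebra_1 set) \<Rightarrow> ('a \<Rightarrow> 'a) \<Rightarrow> bool" where
  "dga G d \<longleftrightarrow>
     (\<forall>k. 0 \<in> G k \<and> (\<forall>x\<in>G k. \<forall>y\<in>G k. x + y \<in> G k) \<and> (\<forall>c. \<forall>x\<in>G k. c *\<^sub>R x \<in> G k)) \<and>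
     (\<forall>k<0. G k = {0}) \<and>
     (\<forall>x. \<exists>!f. finite {k. f k \<noteq> 0} \<and> (\<forall>k. f k \<in> G k) \<and> x = sum f {k. f k \<noteq> 0}) \<and>
     1 \<in> G 0 \<and>
     (\<forall>k l. \<forall>x\<in>G k. \<forall>y\<in>G l. x * y \<in> G (k + l)) \<and>
     (\<forall>k l. \<forall>x\<in>G k. \<forall>y\<in>G l. x * y = sgnp (k * l) *\<^sub>R (y * x)) \<and>
     (\<forall>x y. d (x + y) = d x + d y) \<and> (\<forall>c x. d (c *\<^sub>R x) = c *\<^sub>R d x) \<and>
     (\<forall>k. \<forall>x\<in>G k. d x \<in> G (k + 1)) \<and>
     (\<forall>x. d (d x) = 0) \<and>
     (\<forall>k. \<forall>x\<in>G k. \<forall>y. d (x * y) = d x * y + sgnp k *\<^sub>R (x * d y))"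

definition obar :: "int \<Rightarrow> 'a::real_vector \<Rightarrow> 'a" where
  "obar k x = sgnp k *\<^sub>R x"

text \<open>The element c = sum_{i=1}^n obar xi_1 ... obar xi_(i-1) b_i xi_(i+1) ... xi_n,
  where dx k is the degree of xi_k.\<close>
definition cterm :: "(nat \<Rightarrow> 'a::real_algebra_1) \<Rightarrow> (nat \<Rightarrow> int) \<Rightarrow> (nat \<Rightarrow> 'a) \<Rightarrow> nat \<Rightarrow> 'a" where
  "cterm xi dx b n = (\<Sum>i=1..n.
      prod_list (map (\<lambda>k. obar (dx k) (xi k)) [1..<i]) * b i * prod_list (map xi [Suc i..<Suc n]))"

definition cterm_omit :: "(nat \<Rightarrow> 'a::real_algebra_1) \<Rightarrow> (nat \<Rightarrow> int) \<Rightarrow> (nat \<Rightarrow> 'a) \<Rightarrow> nat \<Rightarrow> nat \<Rightarrow> 'a" where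
  "cterm_omit xi dx b n j = (\<Sum>i\<in>{1..n} - {j}.
      prod_list (map (\<lambda>k. obar (dx k) (xi k)) (filter (\<lambda>k. k \<noteq> j) [1..<i])) * b i *
      prod_list (map xi (filter (\<lambda>k. k \<noteq> j) [Suc i..<Suc n])))"

end

theory Submission
  imports Defs
begin

text \<open>Replacing \<xi>_j by \<xi>_j + \<eta> changes c summand by summand. The summand i = j does not
  contain \<xi>_j; every other summand acquires one extra product in which \<eta>, or its bar when i > j,
  stands in the slot of \<xi>_j, and graded commutativity moves \<eta> to the right end. For i > j it
  passes b_i instead of \<xi>_i, and |\<xi>_i| - |b_i| = |a| - 1 is odd, so the sign differs from the case
  i < j by (-1)^|\<xi>_j|, which the bar cancels. Hence all extra terms carry the common sign
  (-1)^(|\<xi>_j| \<Sum>_{k>j} |\<xi>_k|), whose exponent has the parity claimed. Only the grading and graded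
  commutativity enter.\<close>

lemma sgnp_eq: "sgnp k = (if even k then 1 else -1)"
  by (simp add: sgnp_def power_int_minus_left)

lemma sgnp_add: "sgnp (k + l) = sgnp k * sgnp l"
  by (simp add: sgnp_eq)

lemma sgnp_eq_if_even_diff: "even (k - l) \<Longrightarrow> sgnp k = sgnp l"
  by (simp add: sgnp_eq even_diff_iff)

lemma dga_one_closed: "dga G d \<Longrightarrow> 1 \<in> G 0"
  unfolding dga_def by blast

lemma dga_scaleR_closed: "dga G d \<Longrightarrow> x \<in> G k \<Longrightarrow> c *\<^sub>R x \<in> G k"
  unfolding dga_def by auto

lemma dga_mult_closed: "dga G d \<Longrightarrow> x \<in> G k \<Longrightarrow> y \<in> G l \<Longrightarrow> x * y \<in> G (k + l)"
  unfolding dga_def by blast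

lemma dga_graded_commute:
  "dga G d \<Longrightarrow> x \<in> G k \<Longrightarrow> y \<in> G l \<Longrightarrow> x * y = sgnp (k * l) *\<^sub>R (y * x)"
  unfolding dga_def by blast

lemma dga_prod_list_closed:
  "dga G d \<Longrightarrow> (\<And>k. k \<in> set ks \<Longrightarrow> f k \<in> G (deg k)) \<Longrightarrow>
    prod_list (map f ks) \<in> G (sum_list (map deg ks))"
  by (induction ks) (auto intro: dga_one_closed dga_mult_closed)

lemma upt_split_at: "i \<le> j \<Longrightarrow> j < k \<Longrightarrow> [i..<k] = [i..<j] @ j # [Suc j..<k]"
  by (metis le_add_diff_inverse less_imp_le_nat upt_add_eq_append upt_conv_Cons)

lemma sum_list_upt_Suc_eq_sum: "sum_list (map f [Suc j..<Suc n]) = (\<Sum>k\<in>{j<..n}. f k)"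
  by (simp only: interv_sum_list_conv_sum_set_nat set_upt atLeastLessThanSuc_atLeastAtMost
      atLeastSucAtMost_greaterThanAtMost)

lemma prod_list_map_update_add:
  fixes f :: "'b \<Rightarrow> 'a::semiring_1"
  assumes "j \<notin> set us" and "j \<notin> set ws"
  shows "prod_list (map (f(j := f j + v)) (us @ j # ws)) =
    prod_list (map f (us @ j # ws)) + prod_list (map f us) * v * prod_list (map f ws)"
  using assms by (simp add: algebra_simps)

definition cterm_summand ::
    "(nat \<Rightarrow> 'a::real_algebra_1) \<Rightarrow> (nat \<Rightarrow> int) \<Rightarrow> (nat \<Rightarrow> 'a) \<Rightarrow> nat \<Rightarrow> nat \<Rightarrow> 'a"
  where "cterm_summand xi dx b n i =
    prod_list (map (\<lambda>k. obar (dx k) (xi k)) [1..<i]) * b i * prod_list (map xi [Suc i..<Suc n])"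

definition cterm_omit_summand ::
    "(nat \<Rightarrow> 'a::real_algebra_1) \<Rightarrow> (nat \<Rightarrow> int) \<Rightarrow> (nat \<Rightarrow> 'a) \<Rightarrow> nat \<Rightarrow> nat \<Rightarrow> nat \<Rightarrow> 'a"
  where "cterm_omit_summand xi dx b n j i =
    prod_list (map (\<lambda>k. obar (dx k) (xi k)) (filter (\<lambda>k. k \<noteq> j) [1..<i])) * b i *
    prod_list (map xi (filter (\<lambda>k. k \<noteq> j) [Suc i..<Suc n]))"

lemma obar_fun_upd:
  "(\<lambda>k. obar (dx k) ((xi(j := x)) k)) = (\<lambda>k. obar (dx k) (xi k))(j := obar (dx j) x)"
  by auto

lemma cterm_eq_sum_summand: "cterm xi dx b n = (\<Sum>i=1..n. cterm_summand xi dx b n i)"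
  unfolding cterm_def cterm_summand_def ..

lemma cterm_omit_eq_sum_summand:
  "cterm_omit xi dx b n j = (\<Sum>i\<in>{1..n} - {j}. cterm_omit_summand xi dx b n j i)"
  unfolding cterm_omit_def cterm_omit_summand_def ..

lemma cterm_summand_update_same: "cterm_summand (xi(j := x)) dx b n j = cterm_summand xi dx b n j"
  unfolding cterm_summand_def obar_fun_upd by simp

lemma cterm_summand_update_before:
  assumes D: "dga G d" and xi: "\<And>k. k \<in> {1..n} \<Longrightarrow> xi k \<in> G (dx k)"
    and eta: "eta \<in> G (dx j)" and "i < j" "j \<le> n"
  shows "cterm_summand (xi(j := xi j + eta)) dx b n i = cterm_summand xi dx b n i +
    sgnp (dx j * (\<Sum>k\<in>{j<..n}. dx k)) *\<^sub>R (cterm_omit_summand xi dx b n j i * eta)"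
proof -
  define Q where "Q = prod_list (map (\<lambda>k. obar (dx k) (xi k)) [1..<i])"
  define P1 where "P1 = prod_list (map xi [Suc i..<j])"
  define P2 where "P2 = prod_list (map xi [Suc j..<Suc n])"
  have split: "[Suc i..<Suc n] = [Suc i..<j] @ j # [Suc j..<Suc n]"
    using assms by (intro upt_split_at) auto
  have right: "prod_list (map (xi(j := xi j + eta)) [Suc i..<Suc n]) =
      prod_list (map xi [Suc i..<Suc n]) + P1 * eta * P2"
    unfolding split P1_def P2_def by (rule prod_list_map_update_add) auto
  have omit: "cterm_omit_summand xi dx b n j i = Q * b i * (P1 * P2)"
    using \<open>i < j\<close> unfolding cterm_omit_summand_def Q_def P1_def P2_def split
    by (simp add: filter_True)
  have "P2 \<in> G (\<Sum>k\<in>{j<..n}. dx k)"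
    unfolding P2_def sum_list_upt_Suc_eq_sum[symmetric]
    by (rule dga_prod_list_closed[OF D]) (use xi in auto)
  then have commute: "eta * P2 = sgnp (dx j * (\<Sum>k\<in>{j<..n}. dx k)) *\<^sub>R (P2 * eta)"
    by (rule dga_graded_commute[OF D eta])
  have "cterm_summand (xi(j := xi j + eta)) dx b n i =
      Q * b i * prod_list (map (xi(j := xi j + eta)) [Suc i..<Suc n])"
    using \<open>i < j\<close> unfolding cterm_summand_def obar_fun_upd Q_def by simp
  also have "\<dots> = cterm_summand xi dx b n i + Q * b i * P1 * (eta * P2)"
    unfolding right cterm_summand_def Q_def by (simp add: algebra_simps)
  finally show ?thesis
    unfolding commute omit by (simp add: mult.assoc)
qed

lemma cterm_summand_update_after:
  assumes D: "dga G d" and xi: "\<And>k. k \<in> {1..n} \<Longrightarrow> xi k \<in> G (dx k)"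
    and b: "b i \<in> G (db i)" and parity: "odd (dx i - db i)"
    and eta: "eta \<in> G (dx j)" and "1 \<le> j" "j < i" "i \<le> n"
  shows "cterm_summand (xi(j := xi j + eta)) dx b n i = cterm_summand xi dx b n i +
    sgnp (dx j * (\<Sum>k\<in>{j<..n}. dx k)) *\<^sub>R (cterm_omit_summand xi dx b n j i * eta)"
proof -
  define ob where "ob = (\<lambda>k. obar (dx k) (xi k))"
  define Q1 where "Q1 = prod_list (map ob [1..<j])"
  define Q2 where "Q2 = prod_list (map ob [Suc j..<i])"
  define S where "S = prod_list (map xi [Suc i..<Suc n])"
  define \<delta> where "\<delta> = sum_list (map dx [Suc j..<i]) + db i + sum_list (map dx [Suc i..<Suc n])"
  have split: "[1..<i] = [1..<j] @ j # [Suc j..<i]"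
    using assms by (intro upt_split_at) auto
  have ob_j: "obar (dx j) (xi j + eta) = ob j + sgnp (dx j) *\<^sub>R eta"
    unfolding ob_def obar_def by (simp add: scaleR_add_right)
  have left: "prod_list (map (ob(j := obar (dx j) (xi j + eta))) [1..<i]) =
      prod_list (map ob [1..<i]) + Q1 * (sgnp (dx j) *\<^sub>R eta) * Q2"
    unfolding ob_j split Q1_def Q2_def by (rule prod_list_map_update_add) auto
  have omit: "cterm_omit_summand xi dx b n j i = Q1 * Q2 * b i * S"
    using \<open>j < i\<close> unfolding cterm_omit_summand_def ob_def[symmetric] Q1_def Q2_def S_def split
    by (simp add: filter_True)
  have "Q2 \<in> G (sum_list (map dx [Suc j..<i]))"
    unfolding Q2_def ob_def obar_def
    by (rule dga_prod_list_closed[OF D]) (use xi assms in \<open>auto intro: dga_scaleR_closed[OF D]\<close>)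
  moreover have "S \<in> G (sum_list (map dx [Suc i..<Suc n]))"
    unfolding S_def by (rule dga_prod_list_closed[OF D]) (use xi assms in auto)
  ultimately have "Q2 * b i * S \<in> G \<delta>"
    unfolding \<delta>_def using b by (intro dga_mult_closed[OF D]) auto
  then have commute: "eta * (Q2 * b i * S) = sgnp (dx j * \<delta>) *\<^sub>R (Q2 * b i * S * eta)"
    by (rule dga_graded_commute[OF D eta])
  have split_tail: "[Suc j..<Suc n] = [Suc j..<i] @ i # [Suc i..<Suc n]"
    using assms by (intro upt_split_at) auto
  have "(\<Sum>k\<in>{j<..n}. dx k) = sum_list (map dx [Suc j..<i]) + dx i + sum_list (map dx [Suc i..<Suc n])"
    unfolding sum_list_upt_Suc_eq_sum[symmetric] split_tail by simp
  then have "dx j * (\<Sum>k\<in>{j<..n}. dx k) - (dx j + dx j * \<delta>) = dx j * (dx i - db i - 1)"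
    unfolding \<delta>_def by (simp add: algebra_simps)
  then have "even (dx j * (\<Sum>k\<in>{j<..n}. dx k) - (dx j + dx j * \<delta>))"
    using parity by simp
  then have sign: "sgnp (dx j) * sgnp (dx j * \<delta>) = sgnp (dx j * (\<Sum>k\<in>{j<..n}. dx k))"
    unfolding sgnp_add[symmetric] by (rule sgnp_eq_if_even_diff[symmetric])
  have "cterm_summand (xi(j := xi j + eta)) dx b n i =
      prod_list (map (ob(j := obar (dx j) (xi j + eta))) [1..<i]) * b i * S"
    using \<open>j < i\<close> unfolding cterm_summand_def obar_fun_upd ob_def S_def by simp
  also have "\<dots> = cterm_summand xi dx b n i + sgnp (dx j) *\<^sub>R (Q1 * (eta * (Q2 * b i * S)))"
    unfolding left unfolding cterm_summand_def ob_def S_def by (simp add: algebra_simps)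
  finally show ?thesis
    unfolding commute omit sign[symmetric] by (simp add: mult.assoc)
qed

lemma cterm_update_add:
  assumes D: "dga G d" and xi: "\<And>k. k \<in> {1..n} \<Longrightarrow> xi k \<in> G (dx k)"
    and b: "\<And>k. k \<in> {1..n} \<Longrightarrow> b k \<in> G (db k)"
    and parity: "\<And>k. k \<in> {1..n} \<Longrightarrow> odd (dx k - db k)"
    and eta: "eta \<in> G (dx j)" and j: "j \<in> {1..n}"
  shows "cterm (xi(j := xi j + eta)) dx b n = cterm xi dx b n +
    sgnp (dx j * (\<Sum>k\<in>{j<..n}. dx k)) *\<^sub>R (cterm_omit xi dx b n j * eta)"
proof -
  define \<sigma> where "\<sigma> = sgnp (dx j * (\<Sum>k\<in>{j<..n}. dx k))"
  define extra where "extra = (\<lambda>i. \<sigma> *\<^sub>R (cterm_omit_summand xi dx b n j i * eta))"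
  have summand: "cterm_summand (xi(j := xi j + eta)) dx b n i =
      cterm_summand xi dx b n i + (if i = j then 0 else extra i)" if "i \<in> {1..n}" for i
    using that j unfolding extra_def \<sigma>_def
    by (cases i j rule: linorder_cases)
      (auto simp: cterm_summand_update_same
        intro: cterm_summand_update_before[where G = G and dx = dx, OF D xi eta]
          cterm_summand_update_after[where G = G and dx = dx, OF D xi b parity eta])
  have "cterm (xi(j := xi j + eta)) dx b n =
      cterm xi dx b n + (\<Sum>i=1..n. if i = j then 0 else extra i)"
    unfolding cterm_eq_sum_summand by (simp add: summand sum.distrib)
  also have "(\<Sum>i=1..n. if i = j then 0 else extra i) = (\<Sum>i\<in>{1..n} - {j}. extra i)"
    by (rule sum.mono_neutral_cong_right) auto
  also have "\<dots> = \<sigma> *\<^sub>R (cterm_omit xi dx b n j * eta)"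
    unfolding extra_def cterm_omit_eq_sum_summand by (simp add: scaleR_sum_right sum_distrib_right)
  finally show ?thesis unfolding \<sigma>_def .
qed

theorem lemma2p6:
  fixes G :: "int \<Rightarrow> 'a::real_algebra_1 set" and d :: "'a \<Rightarrow> 'a"
    and a :: 'a and da :: int and b xi :: "nat \<Rightarrow> 'a" and db :: "nat \<Rightarrow> int"
    and n j :: nat and eta :: 'a
  assumes "dga G d"
    and "a \<in> G da" and "even da" and "d a = 0"
    and "\<And>i. i \<in> {1..n} \<Longrightarrow> b i \<in> G (db i) \<and> d (b i) = 0"
    and "\<And>i. i \<in> {1..n} \<Longrightarrow> \<exists>x. d x = a * b i"
    and "\<And>i. i \<in> {1..n} \<Longrightarrow> xi i \<in> G (da + db i - 1) \<and> d (xi i) = a * b i"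
    and "j \<in> {1..n}"
    and "eta \<in> G (da + db j - 1)" and "d eta = 0"
  shows "cterm (xi(j := xi j + eta)) (\<lambda>i. da + db i - 1) b n =
           cterm xi (\<lambda>i. da + db i - 1) b n +
           sgnp ((db j + 1) * (int n - int j + (\<Sum>i\<in>{j<..n}. db i))) *\<^sub>R
             (cterm_omit xi (\<lambda>i. da + db i - 1) b n j * eta)"
proof -
  define e where "e = (\<lambda>i. da + db i - 1)"
  define m where "m = int n - int j"
  define Y where "Y = m + (\<Sum>i\<in>{j<..n}. db i)"
  have e_j: "e j = (db j + 1) + (da - 2)"
    unfolding e_def by simp
  have sum_e: "(\<Sum>k\<in>{j<..n}. e k) = Y + m * (da - 2)"
    using \<open>j \<in> {1..n}\<close> unfolding e_def Y_def m_def
    by (simp add: sum.distrib sum_subtractf of_nat_diff algebra_simps)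
  have "e j * (\<Sum>k\<in>{j<..n}. e k) - (db j + 1) * Y = (da - 2) * ((db j + 1) * m + Y + m * (da - 2))"
    unfolding e_j sum_e by (simp add: algebra_simps)
  then have "sgnp ((db j + 1) * Y) = sgnp (e j * (\<Sum>k\<in>{j<..n}. e k))"
    using \<open>even da\<close> by (intro sgnp_eq_if_even_diff[symmetric]) simp
  moreover have "cterm (xi(j := xi j + eta)) e b n = cterm xi e b n +
      sgnp (e j * (\<Sum>k\<in>{j<..n}. e k)) *\<^sub>R (cterm_omit xi e b n j * eta)"
    using assms(5,7-9) \<open>even da\<close> unfolding e_def by (intro cterm_update_add[OF assms(1)]) auto
  ultimately show ?thesis unfolding e_def Y_def m_def by simp
qed

end
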